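(* Let $X$, $\mu$ be as in the context, under the standing assumptions. For $s\in\mathbb R$ and $r>0$ let $S_r(s)=\sup\sum_i\mu(B(x_i,r))^s$, where the supremum is over all families of pairwise disjoint closed balls $B(x_i,r)$ of radius $r$ with centers $x_i\in X$. Then for every $s\in\mathbb R$, $$\underline\tau_\mu(s):=\liminf_{r\to0}\frac{\log S_r(s)}{\log r}=\min\{\beta_1(s),\beta_2(s)\},\qquad \overline\tau_\mu(s):=\limsup_{r\to0}\frac{\log S_r(s)}{\log r}=\max\{\beta_1(s),\beta_2(s)\}.$$
   Context: Let $\mathcal A=\{0,1\}$. Fix real numbers $A>B>2$, real numbers $p,q$ with $0<p,q\le 1/2$, and a strictly increasing sequence of integers $\mathcal N=(N_i)_{i\ge 0}$ with $N_0=0$. For $n\ge 1$, call $n$ of type A if $N_{2i}<n\le N_{2i+1}$ for some $i\ge 0$, and of type B if $N_{2i+1}<n\le N_{2i+2}$ for some $i\ge0$; put $(r_n,\rho_n)=(A,p)$ if $n$ is of type A and $(r_n,\rho_n)=(B,q)$ if $n$ is of type B. Define closed intervals $I_w$, $w\in\mathcal A^n$, recursively: $I_\emptyset=[0,1]$, and if $w\in\mathcal A^{n-1}$ and $I_w=[x_w,x_w+\ell]$ then $I_{w0}=[x_w,x_w+\ell/r_n]$ and $I_{w1}=[x_w+\ell-\ell/r_n,\,x_w+\ell]$. Let $X=\bigcap_{n\ge1}\bigcup_{w\in\mathcal A^n}I_w$. Let $\mu$ be the unique Borel probability measure on $X$ with $\mu(I_\emptyset)=1$ and, for $w\in\mathcal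 A^{n-1}$, $\mu(I_{w0})=\rho_n\mu(I_w)$, $\mu(I_{w1})=(1-\rho_n)\mu(I_w)$. Standing assumptions: $\lim_{i\to\infty}N_{i+1}/N_i=\infty$ and $-\frac{\log p}{\log A}<-\frac{\log(1-q)}{\log B}$. Define $\beta_1(s)=-\frac{\log(p^s+(1-p)^s)}{\log A}$ and $\beta_2(s)=-\frac{\log(q^s+(1-q)^s)}{\log B}$. *)

theory Defs
  imports "HOL-Probability.Probability"
begin

text \<open>Words over {0,1} are bool lists; False = letter 0, True = letter 1.
Position n (1-based) of a word uses the data (r n, rho n).\<close>

definition typeA :: "(nat \<Rightarrow> nat) \<Rightarrow> nat \<Rightarrow> bool" where
  "typeA N n \<longleftrightarrow> (\<exists>i. N (2*i) < n \<and> n \<le> N (2*i+1))"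

definition rr :: "real \<Rightarrow> real \<Rightarrow> (nat \<Rightarrow> nat) \<Rightarrow> nat \<Rightarrow> real" where
  "rr A B N n = (if typeA N n then A else B)"

definition rho :: "real \<Rightarrow> real \<Rightarrow> (nat \<Rightarrow> nat) \<Rightarrow> nat \<Rightarrow> real" where
  "rho p q N n = (if typeA N n then p else q)"

definition ell :: "real \<Rightarrow> real \<Rightarrow> (nat \<Rightarrow> nat) \<Rightarrow> nat \<Rightarrow> real" where
  "ell A B N n = (\<Prod>k\<in>{1..n}. 1 / rr A B N k)"

text \<open>Left endpoint, by recursion on the reversed word: the word v followed by letter b.\<close>
fun xrev :: "real \<Rightarrow> real \<Rightarrow> (nat \<Rightarrow> nat) \<Rightarrow> bool list \<Rightarrow> real" where
  "xrev A B N [] = 0"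
| "xrev A B N (b # v) = xrev A B N v +
     (if b then ell A B N (length v) - ell A B N (Suc (length v)) else 0)"

definition Iw :: "real \<Rightarrow> real \<Rightarrow> (nat \<Rightarrow> nat) \<Rightarrow> bool list \<Rightarrow> real set" where
  "Iw A B N w = {xrev A B N (rev w) .. xrev A B N (rev w) + ell A B N (length w)}"

definition Xset :: "real \<Rightarrow> real \<Rightarrow> (nat \<Rightarrow> nat) \<Rightarrow> real set" where
  "Xset A B N = (\<Inter>n\<in>{1..}. \<Union>w\<in>{w. length w = n}. Iw A B N w)"

definition weight :: "real \<Rightarrow> real \<Rightarrow> (nat \<Rightarrow> nat) \<Rightarrow> bool list \<Rightarrow> real" where
  "weight p q N w = (\<Prod>k<length w. if w ! k then 1 - rho p q N (Suc k) else rho p q N (Suc k))"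

definition Sr :: "real measure \<Rightarrow> real set \<Rightarrow> real \<Rightarrow> real \<Rightarrow> real" where
  "Sr M X s r = Sup {(\<Sum>x\<in>C. measure M (cball x r) powr s) | C.
       finite C \<and> C \<subseteq> X \<and> (\<forall>x\<in>C. \<forall>y\<in>C. x \<noteq> y \<longrightarrow> cball x r \<inter> cball y r = {})}"

definition beta :: "real \<Rightarrow> real \<Rightarrow> real \<Rightarrow> real" where
  "beta A p s = - ln (p powr s + (1 - p) powr s) / ln A"

end

theory Submission imports Defs begin

text \<open>Siblings at level \<open>m\<close> are separated by a gap of order \<open>\<ell>(m-1)\<close>, so for
\<open>\<ell>(m+K) \<le> r < \<ell>(m+K-1)\<close>, with \<open>K\<close> so large that \<open>B^K\<close> beats the gap constant, a ball of
radius \<open>r\<close> centred in \<open>X\<close> contains the level-\<open>(m+K)\<close> interval of its centre and meets no other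
level-\<open>m\<close> interval. Its mass is therefore \<open>\<mu>(I u)\<close> for the level-\<open>m\<close> word \<open>u\<close>, up to the
factor \<open>min p q ^ K\<close>, and \<open>S r s\<close> is comparable to
\<open>Z n s = (\<Sum>|w| = n. \<mu>(I w) ^ s) = (\<Prod>k\<le>n. \<rho>(k) ^ s + (1 - \<rho>(k)) ^ s)\<close>.
As \<open>-log \<ell>(n) = (\<Sum>k\<le>n. log r(k))\<close>, the ratio \<open>log S r s / log r\<close> is, up to \<open>O(1 / |log r|)\<close>,
the average of \<open>\<beta>\<^sub>1(s)\<close> and \<open>\<beta>\<^sub>2(s)\<close> weighted by the \<open>log r(k)\<close> of the two types.
Because \<open>N (i+1) / N i \<rightarrow> \<infinity>\<close>, at the scales \<open>\<ell>(N (i+1))\<close> the type of the last block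
dominates this average, so both \<open>\<beta>\<^sub>1(s)\<close> and \<open>\<beta>\<^sub>2(s)\<close> are attained as limits.\<close>

lemma powr_bounds_of_ratio_bounds:
  fixes a x T s :: real
  assumes "0 < a" "1 \<le> T" "a \<le> x * T" "x \<le> a * T"
  shows "T powr (-\<bar>s\<bar>) * a powr s \<le> x powr s \<and> x powr s \<le> T powr \<bar>s\<bar> * a powr s"
proof -
  have T0: "0 < T" using assms by simp
  have "0 < x * T" using assms by linarith
  then have x0: "0 < x" using T0 by (simp add: zero_less_mult_iff)
  have "ln a \<le> ln (x * T)" "ln x \<le> ln (a * T)" using assms x0 T0 by simp_all
  then have "\<bar>ln x - ln a\<bar> \<le> ln T" using x0 T0 assms(1) by (simp add: ln_mult)
  then have "\<bar>s * ln x - s * ln a\<bar> \<le> \<bar>s\<bar> * ln T"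
    by (simp add: abs_mult mult_left_mono flip: right_diff_distrib)
  then have "s * ln a - \<bar>s\<bar> * ln T \<le> s * ln x" "s * ln x \<le> s * ln a + \<bar>s\<bar> * ln T"
    by linarith+
  moreover have "x powr s = exp (s * ln x)"
    "T powr (-\<bar>s\<bar>) * a powr s = exp (s * ln a - \<bar>s\<bar> * ln T)"
    "T powr \<bar>s\<bar> * a powr s = exp (s * ln a + \<bar>s\<bar> * ln T)"
    using x0 T0 assms(1) by (simp_all add: powr_def exp_diff exp_add exp_minus field_simps)
  ultimately show ?thesis by simp
qed

lemma Liminf_ge_of_eventually_ge:
  fixes f e :: "'a \<Rightarrow> real"
  assumes "(e \<longlongrightarrow> 0) F" "\<forall>\<^sub>F x in F. l - e x \<le> f x"
  shows "ereal l \<le> Liminf F (\<lambda>x. ereal (f x))"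
proof (subst le_Liminf_iff, intro allI impI)
  fix y assume y: "y < ereal l"
  show "\<forall>\<^sub>F x in F. y < ereal (f x)"
  proof (cases y)
    case (real y')
    then have "\<forall>\<^sub>F x in F. e x < l - y'" using y by (intro order_tendstoD(2)[OF assms(1)]) simp
    with assms(2) show ?thesis by eventually_elim (use real in simp)
  qed (use y in auto)
qed

lemma Limsup_le_of_eventually_le:
  fixes f e :: "'a \<Rightarrow> real"
  assumes "(e \<longlongrightarrow> 0) F" "\<forall>\<^sub>F x in F. f x \<le> l + e x"
  shows "Limsup F (\<lambda>x. ereal (f x)) \<le> ereal l"
proof (subst Limsup_le_iff, intro allI impI)
  fix y assume y: "ereal l < y"
  show "\<forall>\<^sub>F x in F. ereal (f x) < y"
  proof (cases y)
    case (real y')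
    then have "\<forall>\<^sub>F x in F. e x < y' - l" using y by (intro order_tendstoD(2)[OF assms(1)]) simp
    with assms(2) show ?thesis by eventually_elim (use real in simp)
  qed (use y in auto)
qed

lemma Liminf_le_tendsto_along:
  fixes f :: "'a \<Rightarrow> ereal"
  assumes "filterlim g F sequentially" "((\<lambda>i. f (g i)) \<longlongrightarrow> l) sequentially"
  shows "Liminf F f \<le> l"
proof (rule ccontr)
  assume "\<not> Liminf F f \<le> l"
  then obtain y where y: "l < y" "y < Liminf F f" using dense not_le by metis
  have "\<forall>\<^sub>F i in sequentially. y < f (g i)"
    using assms(1)[unfolded filterlim_iff, rule_format, OF less_LiminfD[OF y(2)]] by simp
  moreover have "\<forall>\<^sub>F i in sequentially. f (g i) < y" using order_tendstoD(2)[OF assms(2) y(1)] .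
  ultimately have "\<forall>\<^sub>F i in sequentially. False" by eventually_elim auto
  then show False by simp
qed

lemma Limsup_ge_tendsto_along:
  fixes f :: "'a \<Rightarrow> ereal"
  assumes "filterlim g F sequentially" "((\<lambda>i. f (g i)) \<longlongrightarrow> l) sequentially"
  shows "l \<le> Limsup F f"
proof (rule ccontr)
  assume "\<not> l \<le> Limsup F f"
  then obtain y where y: "Limsup F f < y" "y < l" using dense not_le by metis
  have "\<forall>\<^sub>F i in sequentially. f (g i) < y"
    using assms(1)[unfolded filterlim_iff, rule_format, OF Limsup_lessD[OF y(1)]] by simp
  moreover have "\<forall>\<^sub>F i in sequentially. y < f (g i)" using order_tendstoD(1)[OF assms(2) y(2)] .
  ultimately have "\<forall>\<^sub>F i in sequentially. False" by eventually_elim auto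
  then show False by simp
qed

locale moran_set =
  fixes A B p q :: real and N :: "nat \<Rightarrow> nat"
  assumes B_gt_2: "2 < B" and B_lt_A: "B < A"
    and p_pos: "0 < p" and p_le_half: "p \<le> 1/2" and q_pos: "0 < q" and q_le_half: "q \<le> 1/2"
begin

abbreviation "L \<equiv> ell A B N"
abbreviation "R \<equiv> rr A B N"
abbreviation "rh \<equiv> rho p q N"
abbreviation "xl w \<equiv> xrev A B N (rev w)"
abbreviation "I \<equiv> Iw A B N"
abbreviation "X \<equiv> Xset A B N"
abbreviation "wt \<equiv> weight p q N"

lemma rr_bounds: "B \<le> R k" "R k \<le> A"
  using B_lt_A by (simp_all add: rr_def)

lemma rr_pos: "0 < R k"
  using rr_bounds(1)[of k] B_gt_2 by linarith

lemma ln_rr_bounds: "ln B \<le> ln (R k)" "ln (R k) \<le> ln A"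
  using rr_bounds[of k] B_gt_2 by auto

lemma ln_B_pos: "0 < ln B" and ln_A_pos: "0 < ln A"
  using B_gt_2 B_lt_A by simp_all

lemma gap_factor_pos: "0 < 1 - 2/B"
  using B_gt_2 by (simp add: field_simps)

lemma ell_0 [simp]: "L 0 = 1"
  by (simp add: ell_def)

lemma ell_Suc: "L (Suc n) = L n / R (Suc n)"
  unfolding ell_def by (simp add: prod.cl_ivl_Suc)

lemma ell_pos: "0 < L n"
  by (induction n) (auto simp: ell_Suc rr_pos)

lemma ell_Suc_le_div: "L (Suc n) \<le> L n / B"
  using ell_pos[of n] rr_bounds(1)[of "Suc n"] B_gt_2 by (simp add: ell_Suc frac_le)

lemma ell_Suc_less: "L (Suc n) < L n"
  using ell_pos[of n] rr_bounds(1)[of "Suc n"] B_gt_2 by (simp add: ell_Suc divide_less_eq)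

lemma ell_antimono: "m \<le> n \<Longrightarrow> L n \<le> L m"
  by (induction n rule: dec_induct) (use ell_Suc_less in \<open>auto intro: order.trans less_imp_le\<close>)

lemma ell_add_le: "L (m + j) \<le> L m / B ^ j"
proof (induction j)
  case (Suc j)
  have "L (m + Suc j) \<le> L (m + j) / B" using ell_Suc_le_div[of "m + j"] by simp
  also have "\<dots> \<le> L m / B ^ j / B" using Suc B_gt_2 by (intro divide_right_mono) auto
  finally show ?case by (simp add: field_simps)
qed simp

lemma ell_tendsto_0: "L \<longlonglongrightarrow> 0"
proof (rule Lim_null_comparison)
  show "\<forall>\<^sub>F n in sequentially. norm (L n) \<le> (1/B) ^ n"
    using ell_add_le[of 0] ell_pos by (intro always_eventually allI) (simp add: power_one_over abs_of_pos)
  show "(\<lambda>n. (1/B) ^ n) \<longlonglongrightarrow> 0" using B_gt_2 by (intro LIMSEQ_power_zero) auto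
qed

lemma ln_ell: "ln (L n) = - (\<Sum>k\<in>{1..n}. ln (R k))"
proof (induction n)
  case (Suc n)
  have "ln (L (Suc n)) = ln (L n) - ln (R (Suc n))"
    using ell_pos[of n] rr_pos[of "Suc n"] by (simp add: ell_Suc ln_div)
  then show ?case using Suc by (simp add: sum.cl_ivl_Suc)
qed simp

lemma Iw_eq: "I w = {xl w .. xl w + L (length w)}"
  by (simp add: Iw_def)

lemma Iw_snoc_subset: "I (w @ [b]) \<subseteq> I w"
  using ell_Suc_less[of "length w"] ell_pos[of "Suc (length w)"] by (auto simp: Iw_eq)

lemma Iw_append_subset: "I (w @ v) \<subseteq> I w"
  by (induction v rule: rev_induct) (use Iw_snoc_subset in \<open>auto simp flip: append_assoc\<close>)

lemma Iw_diameter: "x \<in> I w \<Longrightarrow> y \<in> I w \<Longrightarrow> \<bar>x - y\<bar> \<le> L (length w)"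
  by (auto simp: Iw_eq)

lemma Iw_sibling_gap:
  assumes "a \<noteq> b" "x \<in> I (u @ [a])" "y \<in> I (u @ [b])"
  shows "(1 - 2/B) * L (length u) \<le> \<bar>x - y\<bar>"
proof -
  have "2 * L (Suc (length u)) \<le> 2 * L (length u) / B" using ell_Suc_le_div[of "length u"] by simp
  moreover have "(1 - 2/B) * L (length u) = L (length u) - 2 * L (length u) / B"
    by (simp add: algebra_simps)
  ultimately show ?thesis using assms by (cases a) (auto simp: Iw_eq)
qed

text \<open>Distinct level-\<open>(n+1)\<close> intervals are separated by the gap between the children of their
last common ancestor, which is at least the gap \<open>(1 - 2/B) \<ell>(n)\<close> at level \<open>n\<close>.\<close>

lemma Iw_separation:
  "length w = Suc n \<Longrightarrow> length v = Suc n \<Longrightarrow> w \<noteq> v \<Longrightarrow> x \<in> I w \<Longrightarrow> y \<in> I v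
   \<Longrightarrow> (1 - 2/B) * L n \<le> \<bar>x - y\<bar>"
proof (induction n arbitrary: w v x y)
  case 0
  then obtain a b where "w = [] @ [a]" "v = [] @ [b]"
    by (metis Suc_length_conv length_0_conv append_Nil)
  then show ?case using Iw_sibling_gap[of a b x "[]" y] 0 by simp
next
  case (Suc n)
  obtain w0 a v0 b where wv: "w = w0 @ [a]" "v = v0 @ [b]"
    using Suc.prems(1,2) by (metis length_Suc_conv_rev)
  then have len: "length w0 = Suc n" "length v0 = Suc n" using Suc.prems by auto
  show ?case
  proof (cases "w0 = v0")
    case True
    then show ?thesis using Iw_sibling_gap[of a b x w0 y] Suc.prems wv len by auto
  next
    case False
    have "x \<in> I w0" "y \<in> I v0" using Suc.prems wv Iw_snoc_subset by auto
    then have "(1 - 2/B) * L n \<le> \<bar>x - y\<bar>" using Suc.IH[OF len False] by simp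
    moreover have "(1 - 2/B) * L (Suc n) \<le> (1 - 2/B) * L n"
      using ell_Suc_less[of n] gap_factor_pos by (intro mult_left_mono) auto
    ultimately show ?thesis by linarith
  qed
qed

lemma Xset_level_cover:
  assumes "x \<in> X" shows "\<exists>w. length w = n \<and> x \<in> I w"
proof (cases "n = 0")
  case True
  obtain w where "length w = 1" "x \<in> I w" using assms by (auto simp: Xset_def)
  then obtain a where "w = [] @ [a]" by (metis One_nat_def Suc_length_conv length_0_conv append_Nil)
  then show ?thesis using True Iw_snoc_subset[of "[]" a] \<open>x \<in> I w\<close> by auto
qed (use assms in \<open>auto simp: Xset_def\<close>)

lemma xl_append_zeros: "xl (w @ replicate k False) = xl w"
proof -
  have "xrev A B N (replicate k False @ v) = xrev A B N v" for v
    by (induction k) simp_all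
  then show ?thesis by simp
qed

lemma xl_in_Iw: "xl w \<in> I w"
  using ell_pos[of "length w"] by (simp add: Iw_eq)

lemma xl_in_Xset: "xl w \<in> X"
proof -
  have "\<exists>u. length u = m \<and> xl w \<in> I u" for m
  proof (cases "m \<le> length w")
    case True
    then show ?thesis
      using Iw_append_subset[of "take m w" "drop m w"] xl_in_Iw[of w]
      by (intro exI[of _ "take m w"]) auto
  next
    case False
    then show ?thesis
      using xl_in_Iw[of "w @ replicate (m - length w) False"]
      by (intro exI[of _ "w @ replicate (m - length w) False"]) (simp only: xl_append_zeros, simp)
  qed
  then show ?thesis by (auto simp: Xset_def)
qed

lemma finite_words: "finite {w :: bool list. length w = n}"
  using finite_lists_length_eq[of "UNIV :: bool set" n] by simp

lemma closed_Xset: "closed X"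
  unfolding Xset_def Iw_def by (intro closed_INT ballI closed_UN) (auto intro: finite_words)

definition letter_factor :: "nat \<Rightarrow> bool \<Rightarrow> real" where
  "letter_factor k b = (if b then 1 - rh k else rh k)"

definition "min_factor = min p q"

lemma min_factor_pos: "0 < min_factor"
  using p_pos q_pos by (simp add: min_factor_def)

lemma min_factor_le_1: "min_factor \<le> 1"
  using p_le_half q_le_half by (simp add: min_factor_def)

lemma letter_factor_bounds: "min_factor \<le> letter_factor k b" "letter_factor k b \<le> 1"
  using p_pos q_pos p_le_half q_le_half
  by (auto simp: letter_factor_def min_factor_def rho_def)

lemma letter_factor_pos: "0 < letter_factor k b"
  using letter_factor_bounds(1)[of k b] min_factor_pos by linarith

lemma weight_Nil [simp]: "wt [] = 1"
  by (simp add: weight_def)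

lemma weight_snoc: "wt (w @ [b]) = wt w * letter_factor (Suc (length w)) b"
proof -
  have "(\<Prod>k<length w. if (w @ [b]) ! k then 1 - rh (Suc k) else rh (Suc k))
      = (\<Prod>k<length w. if w ! k then 1 - rh (Suc k) else rh (Suc k))"
    by (rule prod.cong) (auto simp: nth_append)
  then show ?thesis unfolding weight_def letter_factor_def by (simp add: nth_append)
qed

lemma weight_pos: "0 < wt w"
  by (induction w rule: rev_induct) (auto simp: weight_snoc letter_factor_pos)

lemma weight_append_ge: "min_factor ^ length v * wt w \<le> wt (w @ v)"
proof (induction v rule: rev_induct)
  case (snoc b v)
  have "min_factor * (min_factor ^ length v * wt w) \<le> min_factor * wt (w @ v)"
    using snoc min_factor_pos by (intro mult_left_mono) auto
  also have "\<dots> \<le> wt ((w @ v) @ [b])"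
    using weight_pos[of "w @ v"] letter_factor_bounds(1)[of "Suc (length (w @ v))" b]
    by (simp only: weight_snoc) (simp add: mult.commute mult_left_mono)
  finally show ?case by (simp add: algebra_simps)
qed simp

definition partition_sum :: "real \<Rightarrow> nat \<Rightarrow> real" where
  "partition_sum s n = (\<Sum>w\<in>{w. length w = n}. wt w powr s)"

definition level_factor :: "real \<Rightarrow> nat \<Rightarrow> real" where
  "level_factor s k = rh k powr s + (1 - rh k) powr s"

lemma level_factor_pos: "0 < level_factor s k"
  using letter_factor_pos[of k False] by (simp add: level_factor_def letter_factor_def add_pos_nonneg)

lemma words_Suc:
  "{w :: bool list. length w = Suc n} = (\<lambda>(w, b). w @ [b]) ` ({w. length w = n} \<times> UNIV)"
proof safe
  fix w :: "bool list" assume "length w = Suc n"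
  then obtain w0 a where "w = w0 @ [a]" by (metis length_Suc_conv_rev)
  then show "w \<in> (\<lambda>(w, b). w @ [b]) ` ({w. length w = n} \<times> UNIV)"
    using \<open>length w = Suc n\<close> by (auto intro!: image_eqI[of _ _ "(w0, a)"])
qed auto

lemma partition_sum_Suc: "partition_sum s (Suc n) = partition_sum s n * level_factor s (Suc n)"
proof -
  have inj: "inj_on (\<lambda>(w, b). w @ [b]) ({w :: bool list. length w = n} \<times> UNIV)"
    by (auto simp: inj_on_def)
  have split: "(\<Sum>b\<in>UNIV. wt (w @ [b]) powr s) = wt w powr s * level_factor s (Suc n)"
    if "length w = n" for w
    using that weight_pos[of w] letter_factor_pos
    by (simp add: weight_snoc powr_mult UNIV_bool level_factor_def letter_factor_def algebra_simps)
  have "partition_sum s (Suc n) = (\<Sum>(w, b)\<in>{w. length w = n} \<times> UNIV. wt (w @ [b]) powr s)"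
    unfolding partition_sum_def words_Suc by (subst sum.reindex[OF inj]) (simp add: case_prod_beta)
  also have "\<dots> = (\<Sum>w\<in>{w. length w = n}. \<Sum>b\<in>UNIV. wt (w @ [b]) powr s)"
    by (rule sum.cartesian_product[symmetric])
  also have "\<dots> = partition_sum s n * level_factor s (Suc n)"
    by (simp add: partition_sum_def sum_distrib_right split)
  finally show ?thesis .
qed

lemma partition_sum_pos: "0 < partition_sum s n"
  by (induction n) (simp_all add: partition_sum_Suc level_factor_pos, simp add: partition_sum_def)

lemma ln_partition_sum: "ln (partition_sum s n) = (\<Sum>k\<in>{1..n}. ln (level_factor s k))"
proof (induction n)
  case (Suc n)
  then show ?case using partition_sum_pos[of s n] level_factor_pos[of s "Suc n"]
    by (simp add: partition_sum_Suc ln_mult sum.cl_ivl_Suc)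
qed (simp add: partition_sum_def)

text \<open>Levels \<open>m\<close> and \<open>m + depth\<close> are far enough apart that a ball whose radius is comparable to
the finer level cannot reach across the gap between siblings at the coarser one.\<close>

definition "depth = (LEAST K. 2 / (1 - 2/B) \<le> B ^ K)"

lemma B_power_depth: "2 / (1 - 2/B) \<le> B ^ depth"
proof -
  obtain K where "2 / (1 - 2/B) < B ^ K" using real_arch_pow[of B] B_gt_2 by auto
  then show ?thesis unfolding depth_def by (rule LeastI[OF less_imp_le])
qed

lemma diameter_below_gap:
  assumes "1 \<le> m" "0 < r" "r < L (m + depth - 1)"
  shows "2 * r < (1 - 2/B) * L (m - 1)"
proof -
  have "L (m - 1 + depth) \<le> L (m - 1) / B ^ depth" by (rule ell_add_le)
  moreover have "m - 1 + depth = m + depth - 1" using assms(1) by simp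
  ultimately have "r < L (m - 1) / B ^ depth" using assms(3) by simp
  then have "r * B ^ depth < L (m - 1)" using B_gt_2 by (simp add: pos_less_divide_eq)
  have "2 * r \<le> (1 - 2/B) * B ^ depth * r"
    using B_power_depth gap_factor_pos assms(2)
    by (intro mult_right_mono) (auto simp: pos_divide_le_eq mult.commute)
  also have "\<dots> < (1 - 2/B) * L (m - 1)"
    using \<open>r * B ^ depth < L (m - 1)\<close> gap_factor_pos by (simp add: mult.commute mult.left_commute)
  finally show ?thesis .
qed

definition "distortion = inverse (min_factor ^ depth)"

lemma distortion_ge_1: "1 \<le> distortion"
  unfolding distortion_def using min_factor_pos min_factor_le_1
  by (simp add: one_le_inverse_iff power_le_one)

lemma weight_le_distortion:
  assumes "length v = depth" shows "wt u \<le> wt (u @ v) * distortion"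
  using weight_append_ge[of v u] assms min_factor_pos unfolding distortion_def
  by (simp add: field_simps)

end

locale moran_measure = moran_set +
  fixes M :: "real measure"
  assumes prob: "prob_space M" and sets_M: "sets M = sets borel"
    and null_outside: "emeasure M (UNIV - Xset A B N) = 0"
    and emeasure_Iw: "\<And>w. emeasure M (Iw A B N w) = ennreal (weight p q N w)"
begin

interpretation prob_space M by (rule prob)

abbreviation "S s r \<equiv> Sr M X s r"

lemma measure_Iw: "measure M (I w) = wt w"
  using emeasure_Iw[of w] weight_pos[of w] by (simp add: measure_def)

lemma closed_in_sets: "closed T \<Longrightarrow> T \<in> sets M"
  by (simp add: sets_M borel_closed)

lemma measure_cball_ge_weight:
  assumes "x \<in> I w" "L (length w) \<le> r" shows "wt w \<le> measure M (cball x r)"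
proof -
  have "I w \<subseteq> cball x r" using assms by (auto simp: Iw_eq dist_real_def)
  then have "measure M (I w) \<le> measure M (cball x r)"
    by (intro finite_measure_mono closed_in_sets) auto
  then show ?thesis by (simp add: measure_Iw)
qed

text \<open>Points of \<open>X\<close> in the ball lie in \<open>I u\<close>, and the rest of the ball is null.\<close>

lemma measure_cball_le_weight:
  assumes "x \<in> I u" "length u = Suc m" "r < (1 - 2/B) * L m"
  shows "measure M (cball x r) \<le> wt u"
proof -
  have "cball x r \<subseteq> I u \<union> (UNIV - X)"
  proof
    fix y assume y: "y \<in> cball x r"
    show "y \<in> I u \<union> (UNIV - X)"
    proof (cases "y \<in> X")
      case True
      then obtain v where v: "length v = Suc m" "y \<in> I v" using Xset_level_cover by blast
      have "v = u"
      proof (rule ccontr)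
        assume "v \<noteq> u"
        then have "(1 - 2/B) * L m \<le> \<bar>x - y\<bar>" using Iw_separation[of u m v x y] assms v by auto
        then show False using y assms(3) by (auto simp: dist_real_def)
      qed
      then show ?thesis using v by auto
    qed auto
  qed
  moreover have "UNIV - X \<in> sets M" by (simp add: sets_M closed_Xset borel_open open_Diff)
  moreover have "I u \<in> sets M" by (simp add: Iw_def closed_in_sets)
  ultimately have "measure M (cball x r) \<le> measure M (I u \<union> (UNIV - X))"
    by (intro finite_measure_mono) auto
  also have "\<dots> \<le> measure M (I u) + measure M (UNIV - X)"
    using \<open>I u \<in> sets M\<close> \<open>UNIV - X \<in> sets M\<close> by (rule measure_Un_le)
  also have "measure M (UNIV - X) = 0" using null_outside by (simp add: measure_def)
  finally show ?thesis by (simp add: measure_Iw)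
qed

lemma cball_measure_powr_bounds:
  assumes x: "x \<in> I (u @ v)" and len: "length u = m" "length v = depth" "1 \<le> m"
    and r: "L (m + depth) \<le> r" "r < L (m + depth - 1)"
  shows "distortion powr (-\<bar>s\<bar>) * wt u powr s \<le> measure M (cball x r) powr s
    \<and> measure M (cball x r) powr s \<le> distortion powr \<bar>s\<bar> * wt (u @ v) powr s"
proof -
  let ?\<mu> = "measure M (cball x r)" and ?T = distortion
  have "0 < r" using r ell_pos[of "m + depth"] by linarith
  then have "r < (1 - 2/B) * L (Suc (m - 1) - 1)"
    using diameter_below_gap[OF len(3) _ r(2)] len(3) by simp
  then have upper: "?\<mu> \<le> wt u"
    using measure_cball_le_weight[of x u "m - 1" r] x Iw_append_subset len by auto
  have lower: "wt (u @ v) \<le> ?\<mu>" using measure_cball_ge_weight[OF x] r len by simp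
  have T: "1 \<le> ?T" by (rule distortion_ge_1)
  have "wt u \<le> wt (u @ v) * ?T" using weight_le_distortion len by simp
  also have "\<dots> \<le> ?\<mu> * ?T" using lower T by (intro mult_right_mono) auto
  finally have "wt u \<le> ?\<mu> * ?T" .
  moreover have "?\<mu> \<le> wt u * ?T" using upper T weight_pos[of u] by (simp add: order_trans[OF _ mult_le_cancel_left1[THEN iffD2]])
  ultimately have "?T powr (-\<bar>s\<bar>) * wt u powr s \<le> ?\<mu> powr s"
    using powr_bounds_of_ratio_bounds[of "wt u" ?T ?\<mu> s] weight_pos[of u] T by blast
  moreover have "?\<mu> \<le> wt (u @ v) * ?T" using upper \<open>wt u \<le> wt (u @ v) * ?T\<close> by linarith
  moreover have "wt (u @ v) \<le> ?\<mu> * ?T" using lower T weight_pos[of "u @ v"] by (simp add: order_trans[OF _ mult_le_cancel_left1[THEN iffD2]])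
  ultimately show ?thesis
    using powr_bounds_of_ratio_bounds[of "wt (u @ v)" ?T ?\<mu> s] weight_pos[of "u @ v"] T by blast
qed

lemma admissible_sum_le:
  assumes n: "depth < n" and r: "L n \<le> r" "r < L (n - 1)"
    and C: "finite C" "C \<subseteq> X" "\<forall>x\<in>C. \<forall>y\<in>C. x \<noteq> y \<longrightarrow> cball x r \<inter> cball y r = {}"
  shows "(\<Sum>x\<in>C. measure M (cball x r) powr s) \<le> distortion powr \<bar>s\<bar> * partition_sum s n"
proof -
  define m where "m = n - depth"
  have m: "1 \<le> m" "n = m + depth" using n by (auto simp: m_def)
  define word where "word x = (SOME w. length w = n \<and> x \<in> I w)" for x
  have word: "length (word x) = n" "x \<in> I (word x)" if "x \<in> C" for x
    using someI_ex[OF Xset_level_cover[of x n]] that C(2) by (auto simp: word_def)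
  have "inj_on word C"
  proof (rule inj_onI, rule ccontr)
    fix x y assume xy: "x \<in> C" "y \<in> C" "word x = word y" "x \<noteq> y"
    then have "\<bar>x - y\<bar> \<le> r" using Iw_diameter[of x "word x" y] word r(1) by fastforce
    then have "(x + y) / 2 \<in> cball x r \<inter> cball y r"
      by (auto simp: dist_real_def abs_if field_simps split: if_splits)
    then show False using C(3) xy by blast
  qed
  have term_le: "measure M (cball x r) powr s \<le> distortion powr \<bar>s\<bar> * wt (word x) powr s"
    if "x \<in> C" for x
    using cball_measure_powr_bounds[of x "take m (word x)" "drop m (word x)" m r s]
      word[OF that] m r by simp
  have "(\<Sum>x\<in>C. measure M (cball x r) powr s) \<le> (\<Sum>x\<in>C. distortion powr \<bar>s\<bar> * wt (word x) powr s)"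
    by (rule sum_mono) (rule term_le)
  also have "\<dots> = distortion powr \<bar>s\<bar> * (\<Sum>w\<in>word ` C. wt w powr s)"
    by (simp add: sum_distrib_left sum.reindex[OF \<open>inj_on word C\<close>])
  also have "\<dots> \<le> distortion powr \<bar>s\<bar> * partition_sum s n"
    unfolding partition_sum_def using word
    by (intro mult_left_mono sum_mono2 finite_words) auto
  finally show ?thesis .
qed

text \<open>The left endpoints of the level-\<open>(n - depth)\<close> intervals form an admissible family of centres.\<close>

lemma admissible_sum_ge:
  assumes n: "depth < n" and r: "L n \<le> r" "r < L (n - 1)"
  obtains C where "finite C" "C \<subseteq> X" "\<forall>x\<in>C. \<forall>y\<in>C. x \<noteq> y \<longrightarrow> cball x r \<inter> cball y r = {}"
    "distortion powr (-\<bar>s\<bar>) * partition_sum s (n - depth) \<le> (\<Sum>x\<in>C. measure M (cball x r) powr s)"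
proof
  define m where "m = n - depth"
  have m: "1 \<le> m" "n = m + depth" using n by (auto simp: m_def)
  let ?W = "{u :: bool list. length u = m}"
  have "0 < r" using r ell_pos[of n] by linarith
  then have far: "2 * r < \<bar>xl u - xl v\<bar>" if "u \<in> ?W" "v \<in> ?W" "u \<noteq> v" for u v
    using Iw_separation[of u "m - 1" v "xl u" "xl v"] diameter_below_gap[of m r] that m r
      xl_in_Iw[of u] xl_in_Iw[of v] by simp
  then have inj: "inj_on xl ?W"
    using \<open>0 < r\<close> by (intro inj_onI) force
  show "finite (xl ` ?W)" "xl ` ?W \<subseteq> X" using finite_words xl_in_Xset by auto
  show "\<forall>x\<in>xl ` ?W. \<forall>y\<in>xl ` ?W. x \<noteq> y \<longrightarrow> cball x r \<inter> cball y r = {}"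
    using far by (fastforce simp: dist_real_def)
  have term_ge: "distortion powr (-\<bar>s\<bar>) * wt u powr s \<le> measure M (cball (xl u) r) powr s"
    if "u \<in> ?W" for u
    using cball_measure_powr_bounds[of "xl u" u "replicate depth False" m r s]
      xl_in_Iw[of "u @ replicate depth False", unfolded xl_append_zeros] that m r by simp
  have "distortion powr (-\<bar>s\<bar>) * partition_sum s m = (\<Sum>u\<in>?W. distortion powr (-\<bar>s\<bar>) * wt u powr s)"
    by (simp add: partition_sum_def sum_distrib_left)
  also have "\<dots> \<le> (\<Sum>u\<in>?W. measure M (cball (xl u) r) powr s)"
    by (rule sum_mono) (rule term_ge)
  also have "\<dots> = (\<Sum>x\<in>xl ` ?W. measure M (cball x r) powr s)"
    by (simp add: sum.reindex[OF inj])
  finally show "distortion powr (-\<bar>s\<bar>) * partition_sum s (n - depth) \<le> \<dots>"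
    by (simp add: m_def)
qed

lemma Sr_bounds:
  assumes n: "depth < n" and r: "L n \<le> r" "r < L (n - 1)"
  shows "distortion powr (-\<bar>s\<bar>) * partition_sum s (n - depth) \<le> S s r
    \<and> S s r \<le> distortion powr \<bar>s\<bar> * partition_sum s n"
proof -
  define admissible_sums where "admissible_sums = {(\<Sum>x\<in>C. measure M (cball x r) powr s) | C.
       finite C \<and> C \<subseteq> X \<and> (\<forall>x\<in>C. \<forall>y\<in>C. x \<noteq> y \<longrightarrow> cball x r \<inter> cball y r = {})}"
  have S_eq: "S s r = Sup admissible_sums" by (simp add: Sr_def admissible_sums_def)
  have ub: "z \<le> distortion powr \<bar>s\<bar> * partition_sum s n" if "z \<in> admissible_sums" for z
    using that admissible_sum_le[OF n r] by (auto simp: admissible_sums_def)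
  obtain C where C: "finite C" "C \<subseteq> X" "\<forall>x\<in>C. \<forall>y\<in>C. x \<noteq> y \<longrightarrow> cball x r \<inter> cball y r = {}"
    and lb: "distortion powr (-\<bar>s\<bar>) * partition_sum s (n - depth) \<le> (\<Sum>x\<in>C. measure M (cball x r) powr s)"
    using admissible_sum_ge[OF n r] .
  have C_in: "(\<Sum>x\<in>C. measure M (cball x r) powr s) \<in> admissible_sums"
    using C unfolding admissible_sums_def by blast
  then have "S s r \<le> distortion powr \<bar>s\<bar> * partition_sum s n"
    unfolding S_eq by (intro cSup_least ub) auto
  moreover have "distortion powr (-\<bar>s\<bar>) * partition_sum s (n - depth) \<le> S s r"
    unfolding S_eq by (rule cSup_upper2[OF C_in lb]) (use ub in \<open>rule bdd_aboveI\<close>)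
  ultimately show ?thesis by simp
qed

end

locale moran_spectrum = moran_measure + fixes s :: real
begin

definition "local_beta k = (if typeA N k then beta A p s else beta B q s)"
definition "beta_lo = min (beta A p s) (beta B q s)"
definition "beta_hi = max (beta A p s) (beta B q s)"

text \<open>\<open>log_scale n = -log \<ell>(n)\<close> and \<open>beta_sum n = -log (partition_sum s n)\<close>.\<close>

definition "log_scale n = (\<Sum>k\<in>{1..n}. ln (R k))"
definition "beta_sum n = (\<Sum>k\<in>{1..n}. local_beta k * ln (R k))"

definition "factor_bound = \<bar>ln (p powr s + (1 - p) powr s)\<bar> + \<bar>ln (q powr s + (1 - q) powr s)\<bar>"
definition "Sr_error = \<bar>s\<bar> * ln distortion + real depth * factor_bound"
definition "ratio_error = Sr_error + (\<bar>beta_lo\<bar> + \<bar>beta_hi\<bar>) * ln A"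

lemma local_beta_bounds: "beta_lo \<le> local_beta k" "local_beta k \<le> beta_hi"
  by (auto simp: beta_lo_def beta_hi_def local_beta_def)

lemma ln_ell_eq: "ln (L n) = - log_scale n"
  by (simp add: ln_ell log_scale_def)

lemma log_scale_ge: "real n * ln B \<le> log_scale n"
  using sum_mono[of "{1..n}" "\<lambda>_. ln B" "\<lambda>k. ln (R k)"] ln_rr_bounds(1)
  by (simp add: log_scale_def)

lemma log_scale_pos:
  assumes "0 < n" shows "0 < log_scale n"
proof -
  have "0 < real n * ln B" using assms ln_B_pos by simp
  then show ?thesis using log_scale_ge[of n] by linarith
qed

lemma ln_level_factor: "ln (level_factor s k) = - local_beta k * ln (R k)"
  using ln_A_pos ln_B_pos unfolding level_factor_def rho_def rr_def local_beta_def beta_def by auto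

lemma ln_partition_sum_eq: "ln (partition_sum s n) = - beta_sum n"
  by (simp add: ln_partition_sum ln_level_factor beta_sum_def sum_negf)

lemma ln_partition_sum_shift:
  "\<bar>ln (partition_sum s (m + j)) - ln (partition_sum s m)\<bar> \<le> real j * factor_bound"
proof (induction j)
  case (Suc j)
  have "ln (partition_sum s (m + Suc j)) = ln (partition_sum s (m + j)) + ln (level_factor s (Suc (m + j)))"
    using partition_sum_pos[of s "m + j"] level_factor_pos[of s "Suc (m + j)"]
    by (simp add: partition_sum_Suc ln_mult)
  moreover have "\<bar>ln (level_factor s (Suc (m + j)))\<bar> \<le> factor_bound"
    unfolding level_factor_def rho_def factor_bound_def by auto
  ultimately show ?case using Suc by (simp add: algebra_simps)
qed simp

lemma beta_sum_bounds: "beta_lo * log_scale n \<le> beta_sum n" "beta_sum n \<le> beta_hi * log_scale n"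
  using ln_rr_bounds(1) ln_B_pos local_beta_bounds
  unfolding beta_sum_def log_scale_def sum_distrib_left
  by (auto intro!: sum_mono mult_right_mono intro: order_trans[OF less_imp_le[OF ln_B_pos]])

lemma beta_sum_deviation:
  assumes "beta_lo \<le> \<beta>" "\<beta> \<le> beta_hi"
  shows "\<bar>beta_sum n - \<beta> * log_scale n\<bar>
    \<le> (beta_hi - beta_lo) * ln A * card {k\<in>{1..n}. local_beta k \<noteq> \<beta>}"
proof -
  have "\<bar>beta_sum n - \<beta> * log_scale n\<bar> = \<bar>\<Sum>k\<in>{1..n}. (local_beta k - \<beta>) * ln (R k)\<bar>"
    by (simp add: beta_sum_def log_scale_def sum_distrib_left sum_subtractf left_diff_distrib)
  also have "\<dots> \<le> (\<Sum>k\<in>{1..n}. if local_beta k \<noteq> \<beta> then (beta_hi - beta_lo) * ln A else 0)"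
  proof (rule order_trans[OF sum_abs sum_mono])
    fix k
    have "0 \<le> ln (R k)" using ln_rr_bounds(1)[of k] ln_B_pos by linarith
    moreover have "\<bar>local_beta k - \<beta>\<bar> \<le> beta_hi - beta_lo" using assms local_beta_bounds[of k] by linarith
    ultimately show "\<bar>(local_beta k - \<beta>) * ln (R k)\<bar>
        \<le> (if local_beta k \<noteq> \<beta> then (beta_hi - beta_lo) * ln A else 0)"
      using ln_rr_bounds(2)[of k] assms by (auto simp: abs_mult intro: mult_mono)
  qed
  also have "\<dots> = (beta_hi - beta_lo) * ln A * card {k\<in>{1..n}. local_beta k \<noteq> \<beta>}"
    by (simp add: sum.If_cases Int_def conj_commute)
  finally show ?thesis .
qed

lemma ln_Sr_close:
  assumes n: "depth < n" and r: "L n \<le> r" "r < L (n - 1)"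
  shows "\<bar>ln (S s r) + beta_sum n\<bar> \<le> Sr_error"
proof -
  let ?T = distortion and ?Z = "partition_sum s"
  have T: "0 < ?T" "0 \<le> ln ?T" using distortion_ge_1 by auto
  note bounds = Sr_bounds[OF n r, of s]
  have pos: "0 < ?T powr (-\<bar>s\<bar>) * ?Z (n - depth)" using T partition_sum_pos by simp
  then have "ln (?T powr (-\<bar>s\<bar>) * ?Z (n - depth)) \<le> ln (S s r)"
    using bounds by (subst ln_le_cancel_iff) auto
  then have lower: "- \<bar>s\<bar> * ln ?T + ln (?Z (n - depth)) \<le> ln (S s r)"
    using T partition_sum_pos[of s "n - depth"] by (simp add: ln_mult ln_powr)
  have "ln (S s r) \<le> ln (?T powr \<bar>s\<bar> * ?Z n)"
    using bounds pos T partition_sum_pos[of s n] by (subst ln_le_cancel_iff) auto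
  then have upper: "ln (S s r) \<le> \<bar>s\<bar> * ln ?T + ln (?Z n)"
    using T partition_sum_pos[of s n] by (simp add: ln_mult ln_powr)
  have "\<bar>ln (?Z n) - ln (?Z (n - depth))\<bar> \<le> real depth * factor_bound"
    using ln_partition_sum_shift[of "n - depth" depth] n by simp
  moreover have "0 \<le> \<bar>s\<bar> * ln ?T" using T by simp
  ultimately show ?thesis
    using lower upper ln_partition_sum_eq[of n] unfolding Sr_error_def by linarith
qed

lemma level_of_radius:
  assumes "0 < r" "r < L depth"
  obtains n where "depth < n" "L n \<le> r" "r < L (n - 1)"
proof -
  from order_tendstoD(2)[OF ell_tendsto_0 assms(1)] obtain j where "L j < r"
    by (auto simp: eventually_sequentially)
  then have ex: "\<exists>j. L j \<le> r" by (blast intro: less_imp_le)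
  define n where "n = (LEAST j. L j \<le> r)"
  have "L n \<le> r" unfolding n_def by (rule LeastI_ex[OF ex])
  moreover have "depth < n"
    using ell_antimono[of n depth] assms \<open>L n \<le> r\<close> by (cases "n \<le> depth") auto
  moreover have "\<not> L (n - 1) \<le> r"
    unfolding n_def by (rule not_less_Least) (use calculation n_def in auto)
  ultimately show ?thesis using that by auto
qed

lemma ratio_close:
  assumes n: "depth < n" and r: "L n \<le> r" "r < L (n - 1)"
  shows "\<bar>ln (S s r) / ln r - beta_sum n / log_scale n\<bar> \<le> ratio_error / (- ln r)"
proof -
  define D where "D = - ln r"
  define \<delta> where "\<delta> = ln (S s r) + beta_sum n"
  let ?T = "log_scale n" and ?P = "beta_sum n"
  have T: "0 < ?T" using n log_scale_pos by simp
  have "0 < r" using r ell_pos[of n] by linarith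
  have "ln (L n) \<le> ln r" using r(1) ell_pos[of n] by simp
  then have D: "D \<le> ?T" using ln_ell_eq[of n] by (simp add: D_def)
  obtain n' where n': "n = Suc n'" using n by (cases n) auto
  have "ln r < ln (L n')" using r(2) n' \<open>0 < r\<close> by simp
  then have "?T - D < ln A"
    using ln_ell_eq[of n'] ln_rr_bounds(2)[of n] n' by (simp add: D_def log_scale_def sum.cl_ivl_Suc)
  have "r < 1" using r(2) ell_antimono[of 0 "n - 1"] by simp
  then have D0: "0 < D" using \<open>0 < r\<close> by (simp add: D_def)
  have "beta_hi * ?T \<le> (\<bar>beta_lo\<bar> + \<bar>beta_hi\<bar>) * ?T" "- beta_lo * ?T \<le> (\<bar>beta_lo\<bar> + \<bar>beta_hi\<bar>) * ?T"
    using T by (intro mult_right_mono; simp)+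
  then have "\<bar>?P\<bar> \<le> (\<bar>beta_lo\<bar> + \<bar>beta_hi\<bar>) * ?T" using beta_sum_bounds[of n] by linarith
  then have ratio: "\<bar>?P / ?T\<bar> \<le> \<bar>beta_lo\<bar> + \<bar>beta_hi\<bar>"
    using T by (simp add: abs_divide pos_divide_le_eq)
  have "ln (S s r) / ln r - ?P / ?T = (?P / ?T * (?T - D) - \<delta>) / D"
    using T D0 by (simp add: D_def \<delta>_def field_simps)
  also have "\<bar>\<dots>\<bar> \<le> (\<bar>?P / ?T\<bar> * (?T - D) + \<bar>\<delta>\<bar>) / D"
    using D D0 by (simp add: divide_right_mono abs_triangle_ineq4[THEN order_trans] abs_mult)
  also have "\<dots> \<le> ((\<bar>beta_lo\<bar> + \<bar>beta_hi\<bar>) * ln A + Sr_error) / D"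
    using ratio \<open>?T - D < ln A\<close> D D0 ln_Sr_close[OF n r]
    by (intro divide_right_mono add_mono mult_mono) (auto simp: \<delta>_def)
  finally show ?thesis by (simp add: ratio_error_def D_def add.commute)
qed

lemma ratio_error_nonneg: "0 \<le> ratio_error"
  using distortion_ge_1 ln_A_pos
  by (simp add: ratio_error_def Sr_error_def factor_bound_def)

lemma ratio_error_tendsto_0: "((\<lambda>r. ratio_error / (- ln r)) \<longlongrightarrow> 0) (at_right 0)"
proof -
  have "filterlim (\<lambda>r. - ln r) at_top (at_right (0 :: real))"
    using ln_at_0 by (simp add: filterlim_uminus_at_bot[symmetric])
  then show ?thesis
    by (intro tendsto_divide_0[OF tendsto_const] filterlim_at_top_imp_at_infinity)
qed

lemma ratio_eventually_between:
  "\<forall>\<^sub>F r in at_right 0. beta_lo - ratio_error / (- ln r) \<le> ln (S s r) / ln r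
     \<and> ln (S s r) / ln r \<le> beta_hi + ratio_error / (- ln r)"
proof -
  have "\<forall>\<^sub>F r in at_right 0. 0 < r \<and> r < L depth"
    using ell_pos[of depth] by (auto simp: eventually_at_right_field intro!: exI[of _ "L depth"])
  then show ?thesis
  proof eventually_elim
    case (elim r)
    then obtain n where n: "depth < n" "L n \<le> r" "r < L (n - 1)" by (auto elim: level_of_radius)
    have "0 < log_scale n" using n log_scale_pos by simp
    then have "beta_lo \<le> beta_sum n / log_scale n" "beta_sum n / log_scale n \<le> beta_hi"
      using beta_sum_bounds[of n] by (simp_all add: pos_le_divide_eq pos_divide_le_eq)
    then show ?case using ratio_close[OF n] by linarith
  qed
qed

lemma ratio_Liminf_Limsup_bounds:
  "ereal beta_lo \<le> Liminf (at_right 0) (\<lambda>r. ereal (ln (S s r) / ln r))"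
  "Limsup (at_right 0) (\<lambda>r. ereal (ln (S s r) / ln r)) \<le> ereal beta_hi"
  using ratio_eventually_between
  by (auto intro!: Liminf_ge_of_eventually_ge Limsup_le_of_eventually_le ratio_error_tendsto_0
      elim: eventually_mono)

lemma ratio_at_ell_close:
  assumes n: "depth < n" and \<beta>: "beta_lo \<le> \<beta>" "\<beta> \<le> beta_hi"
  shows "\<bar>ln (S s (L n)) / ln (L n) - \<beta>\<bar>
    \<le> (ratio_error + (beta_hi - beta_lo) * ln A * card {k\<in>{1..n}. local_beta k \<noteq> \<beta>}) / (real n * ln B)"
proof -
  let ?T = "log_scale n" and ?c = "card {k\<in>{1..n}. local_beta k \<noteq> \<beta>}"
  have T: "0 < real n * ln B" "real n * ln B \<le> ?T" using n ln_B_pos log_scale_ge[of n] by auto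
  have "L n < L (n - 1)" using ell_Suc_less[of "n - 1"] n by simp
  then have "\<bar>ln (S s (L n)) / ln (L n) - beta_sum n / ?T\<bar> \<le> ratio_error / ?T"
    using ratio_close[OF n order.refl] by (simp add: ln_ell_eq)
  moreover have "\<bar>beta_sum n / ?T - \<beta>\<bar> \<le> (beta_hi - beta_lo) * ln A * ?c / ?T"
    using beta_sum_deviation[OF \<beta>, of n] T by (simp add: divide_right_mono field_simps)
  ultimately have "\<bar>ln (S s (L n)) / ln (L n) - \<beta>\<bar> \<le> (ratio_error + (beta_hi - beta_lo) * ln A * ?c) / ?T"
    by (simp add: add_divide_distrib)
  also have "\<dots> \<le> (ratio_error + (beta_hi - beta_lo) * ln A * ?c) / (real n * ln B)"
    using T ratio_error_nonneg \<beta> ln_A_pos by (intro divide_left_mono add_nonneg_nonneg) auto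
  finally show ?thesis .
qed

lemma ratio_tendsto_along_scales:
  assumes h: "filterlim h at_top sequentially" and \<beta>: "beta_lo \<le> \<beta>" "\<beta> \<le> beta_hi"
    and sparse: "(\<lambda>i. card {k\<in>{1..h i}. local_beta k \<noteq> \<beta>} / real (h i)) \<longlonglongrightarrow> 0"
  shows "(\<lambda>i. ln (S s (L (h i))) / ln (L (h i))) \<longlonglongrightarrow> \<beta>"
proof -
  let ?c = "\<lambda>i. card {k\<in>{1..h i}. local_beta k \<noteq> \<beta>}"
  let ?bound = "\<lambda>i. ratio_error / ln B * inverse (real (h i)) + (beta_hi - beta_lo) * ln A / ln B * (?c i / real (h i))"
  have "\<forall>\<^sub>F i in sequentially. Suc depth \<le> h i"
    using h unfolding filterlim_at_top by blast
  then have close: "\<forall>\<^sub>F i in sequentially. norm (ln (S s (L (h i))) / ln (L (h i)) - \<beta>) \<le> ?bound i"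
  proof eventually_elim
    case (elim i)
    then have "depth < h i" by simp
    have split: "(e + C * c) / (n * b) = e / b * inverse n + C / b * (c / n)" for e C c n b :: real
      by (simp only: divide_inverse inverse_mult_distrib distrib_left distrib_right mult_ac)
    have "norm (ln (S s (L (h i))) / ln (L (h i)) - \<beta>)
        \<le> (ratio_error + (beta_hi - beta_lo) * ln A * ?c i) / (real (h i) * ln B)"
      using ratio_at_ell_close[OF \<open>depth < h i\<close> \<beta>] by (simp only: real_norm_def)
    also have "\<dots> = ?bound i" by (rule split)
    finally show ?case .
  qed
  have "(\<lambda>i. inverse (real (h i))) \<longlonglongrightarrow> 0"
    by (rule tendsto_inverse_0_at_top[OF filterlim_compose[OF filterlim_real_sequentially h]])
  then have "?bound \<longlonglongrightarrow> ratio_error / ln B * 0 + (beta_hi - beta_lo) * ln A / ln B * 0"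
    by (intro tendsto_add tendsto_mult_left sparse)
  then have "?bound \<longlonglongrightarrow> 0" by (simp only: mult_zero_right add_0)
  with close have "(\<lambda>i. ln (S s (L (h i))) / ln (L (h i)) - \<beta>) \<longlonglongrightarrow> 0"
    by (rule Lim_null_comparison)
  then show ?thesis by (rule LIM_zero_cancel)
qed

end

lemma card_not_typeA_le: "card {k\<in>{1..N (2*i+1)}. \<not> typeA N k} \<le> N (2*i)"
proof -
  have "{k\<in>{1..N (2*i+1)}. \<not> typeA N k} \<subseteq> {1..N (2*i)}"
  proof
    fix k assume "k \<in> {k\<in>{1..N (2*i+1)}. \<not> typeA N k}"
    then have "1 \<le> k" "\<not> (N (2*i) < k \<and> k \<le> N (2*i+1))" "k \<le> N (2*i+1)"
      unfolding typeA_def by auto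
    then show "k \<in> {1..N (2*i)}" by auto
  qed
  then show ?thesis using card_mono[of "{1..N (2*i)}"] by fastforce
qed

lemma card_typeA_le:
  assumes "strict_mono N" shows "card {k\<in>{1..N (2*i+2)}. typeA N k} \<le> N (2*i+1)"
proof -
  have "k \<le> N (2*i+1)" if "k \<le> N (2*i+2)" "N (2*j) < k" "k \<le> N (2*j+1)" for k j
  proof -
    have "j \<le> i"
      using that strict_mono_less_eq[OF assms, of "2*i+2" "2*j"] by linarith
    then show ?thesis using that strict_mono_less_eq[OF assms, of "2*j+1" "2*i+1"] by simp
  qed
  then have "{k\<in>{1..N (2*i+2)}. typeA N k} \<subseteq> {1..N (2*i+1)}"
    by (auto simp: typeA_def)
  then show ?thesis using card_mono[of "{1..N (2*i+1)}"] by fastforce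
qed

locale moran_alternating = moran_spectrum +
  assumes strict_mono_N: "strict_mono N"
    and growth: "filterlim (\<lambda>i. real (N (Suc i)) / real (N i)) at_top sequentially"
begin

lemma block_ends_at_top:
  "filterlim g at_top sequentially \<Longrightarrow> filterlim (\<lambda>i. N (Suc (g i))) at_top sequentially"
  using filterlim_compose[OF filterlim_subseq[OF strict_mono_N] filterlim_compose[OF filterlim_Suc]]
  by blast

lemma block_end_scales:
  assumes "filterlim g at_top sequentially"
  shows "filterlim (\<lambda>i. L (N (Suc (g i)))) (at_right 0) sequentially"
  unfolding filterlim_at
proof
  show "\<forall>\<^sub>F i in sequentially. L (N (Suc (g i))) \<in> {0<..} \<and> L (N (Suc (g i))) \<noteq> 0"
    using ell_pos by (intro always_eventually allI) (simp add: less_imp_neq[symmetric])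
  show "(\<lambda>i. L (N (Suc (g i)))) \<longlonglongrightarrow> 0"
    by (rule filterlim_compose[OF ell_tendsto_0 block_ends_at_top[OF assms]])
qed

text \<open>At the end \<open>N (i+1)\<close> of a block, the letters of the other type occupy at most the first
\<open>N i\<close> positions, a vanishing proportion.\<close>

lemma ratio_tendsto_at_block_ends:
  assumes g: "filterlim g at_top sequentially" and \<beta>: "beta_lo \<le> \<beta>" "\<beta> \<le> beta_hi"
    and count: "\<And>i. card {k\<in>{1..N (Suc (g i))}. local_beta k \<noteq> \<beta>} \<le> N (g i)"
  shows "(\<lambda>i. ln (S s (L (N (Suc (g i))))) / ln (L (N (Suc (g i))))) \<longlonglongrightarrow> \<beta>"
proof (rule ratio_tendsto_along_scales[OF block_ends_at_top[OF g] \<beta>])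
  have "(\<lambda>i. inverse (real (N (Suc (g i))) / real (N (g i)))) \<longlonglongrightarrow> 0"
    by (rule tendsto_inverse_0_at_top[OF filterlim_compose[OF growth g]])
  then have ratio0: "(\<lambda>i. real (N (g i)) / real (N (Suc (g i)))) \<longlonglongrightarrow> 0"
    by (simp add: inverse_divide)
  show "(\<lambda>i. card {k\<in>{1..N (Suc (g i))}. local_beta k \<noteq> \<beta>} / real (N (Suc (g i)))) \<longlonglongrightarrow> 0"
  proof (rule tendsto_sandwich[OF _ _ tendsto_const ratio0])
    show "\<forall>\<^sub>F i in sequentially. 0 \<le> card {k\<in>{1..N (Suc (g i))}. local_beta k \<noteq> \<beta>} / real (N (Suc (g i)))"
      by (intro always_eventually allI divide_nonneg_nonneg) simp_all
    show "\<forall>\<^sub>F i in sequentially. card {k\<in>{1..N (Suc (g i))}. local_beta k \<noteq> \<beta>} / real (N (Suc (g i)))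
        \<le> real (N (g i)) / real (N (Suc (g i)))"
      by (intro always_eventually allI divide_right_mono of_nat_mono count) simp
  qed
qed

lemma ratio_tendsto_beta_A:
  "(\<lambda>i. ln (S s (L (N (Suc (2*i))))) / ln (L (N (Suc (2*i))))) \<longlonglongrightarrow> beta A p s"
proof (rule ratio_tendsto_at_block_ends)
  show "filterlim (\<lambda>i. 2 * i) at_top sequentially" by (rule mult_nat_left_at_top) simp
  show "card {k\<in>{1..N (Suc (2*i))}. local_beta k \<noteq> beta A p s} \<le> N (2*i)" for i
  proof (rule order_trans[OF card_mono card_not_typeA_le])
    show "{k\<in>{1..N (Suc (2*i))}. local_beta k \<noteq> beta A p s} \<subseteq> {k\<in>{1..N (2*i+1)}. \<not> typeA N k}"
      by (auto simp: local_beta_def)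
  qed simp
qed (simp_all add: beta_lo_def beta_hi_def)

lemma ratio_tendsto_beta_B:
  "(\<lambda>i. ln (S s (L (N (Suc (2*i+1))))) / ln (L (N (Suc (2*i+1))))) \<longlonglongrightarrow> beta B q s"
proof (rule ratio_tendsto_at_block_ends)
  show "filterlim (\<lambda>i. 2 * i + 1) at_top sequentially"
    by (rule filterlim_subseq) (auto simp: strict_mono_def)
  show "card {k\<in>{1..N (Suc (2*i+1))}. local_beta k \<noteq> beta B q s} \<le> N (2*i+1)" for i
  proof (rule order_trans[OF card_mono card_typeA_le[OF strict_mono_N]])
    show "{k\<in>{1..N (Suc (2*i+1))}. local_beta k \<noteq> beta B q s} \<subseteq> {k\<in>{1..N (2*i+2)}. typeA N k}"
      by (auto simp: local_beta_def)
  qed simp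
qed (simp_all add: beta_lo_def beta_hi_def)

lemma ratio_Liminf_Limsup:
  "Liminf (at_right 0) (\<lambda>r. ereal (ln (S s r) / ln r)) = ereal beta_lo
   \<and> Limsup (at_right 0) (\<lambda>r. ereal (ln (S s r) / ln r)) = ereal beta_hi"
proof -
  let ?f = "\<lambda>r. ereal (ln (S s r) / ln r)"
  have A: "filterlim (\<lambda>i. L (N (Suc (2*i)))) (at_right 0) sequentially"
    "((\<lambda>i. ?f (L (N (Suc (2*i))))) \<longlongrightarrow> ereal (beta A p s)) sequentially"
    using block_end_scales[OF mult_nat_left_at_top] tendsto_ereal[OF ratio_tendsto_beta_A] by simp_all
  have B: "filterlim (\<lambda>i. L (N (Suc (2*i+1)))) (at_right 0) sequentially"
    "((\<lambda>i. ?f (L (N (Suc (2*i+1))))) \<longlongrightarrow> ereal (beta B q s)) sequentially"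
    using block_end_scales[of "\<lambda>i. 2*i+1"] tendsto_ereal[OF ratio_tendsto_beta_B]
    by (simp_all add: filterlim_subseq strict_mono_def)
  have "Liminf (at_right 0) ?f \<le> ereal (beta A p s)" "Liminf (at_right 0) ?f \<le> ereal (beta B q s)"
    "ereal (beta A p s) \<le> Limsup (at_right 0) ?f" "ereal (beta B q s) \<le> Limsup (at_right 0) ?f"
    using Liminf_le_tendsto_along[OF A] Liminf_le_tendsto_along[OF B]
      Limsup_ge_tendsto_along[OF A] Limsup_ge_tendsto_along[OF B] by simp_all
  then show ?thesis
    using ratio_Liminf_Limsup_bounds by (auto simp: beta_lo_def beta_hi_def intro: antisym)
qed

end

text \<open>The hypotheses \<open>N 0 = 0\<close> and \<open>-log p / log A < -log (1 - q) / log B\<close> are standing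
assumptions of the paper that this result does not need.\<close>

theorem mainTheorem8:
  fixes A B p q :: real and N :: "nat \<Rightarrow> nat" and M :: "real measure" and s :: real
  assumes "2 < B" and "B < A"
    and "0 < p" and "p \<le> 1/2" and "0 < q" and "q \<le> 1/2"
    and "strict_mono N" and "N 0 = 0"
    and "filterlim (\<lambda>i. real (N (Suc i)) / real (N i)) at_top sequentially"
    and "- ln p / ln A < - ln (1 - q) / ln B"
    and "prob_space M" and "sets M = sets borel"
    and "emeasure M (UNIV - Xset A B N) = 0"
    and "\<And>w. emeasure M (Iw A B N w) = ennreal (weight p q N w)"
  shows "Liminf (at_right 0) (\<lambda>r. ereal (ln (Sr M (Xset A B N) s r) / ln r))
           = ereal (min (beta A p s) (beta B q s))
         \<and> Limsup (at_right 0) (\<lambda>r. ereal (ln (Sr M (Xset A B N) s r) / ln r))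
           = ereal (max (beta A p s) (beta B q s))"
proof -
  interpret moran_alternating A B p q N M s
    by (intro moran_alternating.intro moran_spectrum.intro moran_measure.intro moran_set.intro
        moran_measure_axioms.intro moran_alternating_axioms.intro) (fact assms)+
  show ?thesis using ratio_Liminf_Limsup unfolding beta_lo_def beta_hi_def .
qed

end
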